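(* Let $C_i, C_j, C_k$ be three pairwise disjoint closed circular discs in $\mathbb{R}^2$ with non-collinear centers $c_i,c_j,c_k$, and let $F$ be their feasible region. Then every point $q\in F$ illuminates every point of each of the three objective arcs: for every point $p$ on the objective arc of any of the three discs, the open segment from $q$ to $p$ does not meet the interior of $C_i$, $C_j$ or $C_k$.
   Context: For two disjoint closed discs $C_a, C_b$ with centers $c_a,c_b$, let $p_a, p_b$ be the points where the segment $\overline{c_ac_b}$ meets the boundary circles of $C_a$ and $C_b$ respectively, and let $l_a, l_b$ be the lines through $p_a$, $p_b$ perpendicular to $\overline{c_ac_b}$. The slab $S_{a,b}$ is the closed region between the parallel lines $l_a$ and $l_b$. For three pairwise disjoint discs $C_i,C_j,C_k$, the feasible region is $S_{i,j}\cap S_{j,k}\cap S_{i,k}$. Objective arcs: on each disc, say $C_i$, the edges $\overline{c_ic_j}$ and $\overline{c_ic_k}$ of the triangle $c_ic_jc_k$ meet the boundary circle of $C_i$ in two points; the objective arc of $C_i$ is the arc of the boundary circle of $C_i$ with these two points as endpoints whose length is less than half the circumference (the arc facing the interior of the triangle). Objective arcs of $C_j$, $C_k$ are defined analogously. *)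

theory Defs
  imports "HOL-Analysis.Analysis"
begin

type_synonym point = "real^2"

definition near_point :: "point \<Rightarrow> real \<Rightarrow> point \<Rightarrow> point" where
  "near_point ca ra cb = ca + (ra / norm (cb - ca)) *\<^sub>R (cb - ca)"

text \<open>Slab S_{a,b}: closed region between the lines through p_a and p_b
  perpendicular to the segment c_a c_b.\<close>
definition slab :: "point \<Rightarrow> real \<Rightarrow> point \<Rightarrow> real \<Rightarrow> point set" where
  "slab ca ra cb rb =
     {x. (x - near_point ca ra cb) \<bullet> (cb - ca) \<ge> 0 \<and>
         (x - near_point cb rb ca) \<bullet> (cb - ca) \<le> 0}"

definition feasible_region ::
  "point \<Rightarrow> real \<Rightarrow> point \<Rightarrow> real \<Rightarrow> point \<Rightarrow> real \<Rightarrow> point set" where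
  "feasible_region ci ri cj rj ck rk =
     slab ci ri cj rj \<inter> slab cj rj ck rk \<inter> slab ci ri ck rk"

text \<open>Minor (shorter) arc of the circle sphere c r between two points e1, e2 of that
  circle, in the non-antipodal case: the points of the circle lying in the closed
  convex angular sector at c spanned by e1 - c and e2 - c.\<close>
definition minor_arc :: "point \<Rightarrow> real \<Rightarrow> point \<Rightarrow> point \<Rightarrow> point set" where
  "minor_arc c r e1 e2 =
     sphere c r \<inter> {c + a *\<^sub>R (e1 - c) + b *\<^sub>R (e2 - c) | a b. a \<ge> 0 \<and> b \<ge> 0}"

definition objective_arc :: "point \<Rightarrow> real \<Rightarrow> point \<Rightarrow> point \<Rightarrow> point set" where
  "objective_arc ci ri cj ck = minor_arc ci ri (near_point ci ri cj) (near_point ci ri ck)"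

end

theory Submission
  imports Defs
begin

text \<open>
  Each open disc is kept off the segment by a closed half-plane that contains both q and p,
  because half-planes are convex. For a disc other than the one carrying the arc, the
  half-plane is bounded by the slab line through its near point: q lies beyond it by
  feasibility, and the whole disc carrying p lies beyond it by disjointness. For the disc
  carrying the arc, take the tangent half-plane at p itself: the directions v with
  (q - c) \<bullet> v \<ge> r \<parallel>v\<parallel> form a convex cone, it contains the directions of both
  arc endpoints by feasibility, and p - c is a nonnegative combination of them.
\<close>

lemma halfspace_disjoint_ball:
  fixes c v :: "'a::real_inner"
  assumes "v \<noteq> 0"
  shows "{x. (x - c) \<bullet> v \<ge> r * norm v} \<inter> ball c r = {}"
proof -
  have "(x - c) \<bullet> v < r * norm v" if "x \<in> ball c r" for x
  proof -
    have "(x - c) \<bullet> v \<le> norm (x - c) * norm v" by (rule norm_cauchy_schwarz)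
    also have "\<dots> < r * norm v"
      using that assms by (intro mult_strict_right_mono) (auto simp: dist_norm norm_minus_commute)
    finally show ?thesis .
  qed
  then show ?thesis by force
qed

lemma open_segment_disjoint_ball:
  fixes c v :: "'a::real_inner"
  assumes "v \<noteq> 0" "(q - c) \<bullet> v \<ge> r * norm v" "(p - c) \<bullet> v \<ge> r * norm v"
  shows "open_segment q p \<inter> ball c r = {}"
proof -
  let ?H = "{x. (x - c) \<bullet> v \<ge> r * norm v}"
  have "?H = {x. v \<bullet> x \<ge> r * norm v + v \<bullet> c}"
    by (auto simp: inner_diff_right inner_commute[of _ v])
  then have "convex ?H" by (simp add: convex_halfspace_ge)
  then have "closed_segment q p \<subseteq> ?H"
    using assms by (intro closed_segment_subset) auto
  then show ?thesis
    using halfspace_disjoint_ball[OF assms(1)] open_closed_segment by blast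
qed

lemma disjoint_cballD:
  fixes a b :: "'a::real_normed_vector"
  assumes "cball a r \<inter> cball b s = {}" "r \<ge> 0" "s \<ge> 0"
  shows "dist a b > r + s"
proof (rule ccontr)
  assume "\<not> ?thesis"
  then have d: "dist a b \<le> r + s" by simp
  have rs: "r + s > 0"
  proof (rule ccontr)
    assume "\<not> r + s > 0"
    then have "r = 0" "s = 0" "dist a b = 0" using d assms(2,3) zero_le_dist[of a b] by linarith+
    then show False using assms(1) by auto
  qed
  define t where "t = r / (r + s)"
  define x where "x = a + t *\<^sub>R (b - a)"
  have t: "0 \<le> t" "t \<le> 1" "t * (r + s) = r" "(1 - t) * (r + s) = s"
    using assms rs by (auto simp: t_def field_simps)
  have "dist a x = t * dist a b"
    using t by (simp add: x_def dist_norm norm_minus_commute)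
  also have "\<dots> \<le> r" using d t mult_left_mono by metis
  finally have "x \<in> cball a r" by simp
  moreover have "dist b x = (1 - t) * dist a b"
  proof -
    have "x - b = (1 - t) *\<^sub>R (a - b)" by (simp add: x_def algebra_simps)
    then show ?thesis using t by (simp add: dist_norm norm_minus_commute[of b])
  qed
  then have "x \<in> cball b s" using d t mult_left_mono[of "dist a b" "r + s" "1 - t"] by simp
  ultimately show False using assms(1) by blast
qed

lemma cball_subset_far_halfspace:
  fixes a b :: "'a::real_inner"
  assumes "p \<in> cball a r" "dist a b \<ge> r + s"
  shows "(p - b) \<bullet> (a - b) \<ge> s * norm (a - b)"
proof -
  have "(p - b) \<bullet> (a - b) = norm (a - b) ^ 2 + (p - a) \<bullet> (a - b)"
    by (simp add: power2_norm_eq_inner inner_diff_left)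
  also have "(p - a) \<bullet> (a - b) \<ge> - (r * norm (a - b))"
  proof -
    have "\<bar>(p - a) \<bullet> (a - b)\<bar> \<le> norm (p - a) * norm (a - b)" by (rule Cauchy_Schwarz_ineq2)
    also have "\<dots> \<le> r * norm (a - b)"
      using assms(1) by (intro mult_right_mono) (auto simp: dist_norm norm_minus_commute)
    finally show ?thesis by linarith
  qed
  moreover have "norm (a - b) ^ 2 \<ge> (r + s) * norm (a - b)"
    using assms(2) by (simp add: power2_eq_square dist_norm mult_right_mono)
  ultimately show ?thesis by (simp add: algebra_simps)
qed

lemma inner_ge_norm_conic_combination:
  fixes y u w :: "'a::real_inner"
  assumes "r \<ge> 0" "y \<bullet> u \<ge> r * norm u" "y \<bullet> w \<ge> r * norm w" "\<alpha> \<ge> 0" "\<beta> \<ge> 0"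
  shows "y \<bullet> (\<alpha> *\<^sub>R u + \<beta> *\<^sub>R w) \<ge> r * norm (\<alpha> *\<^sub>R u + \<beta> *\<^sub>R w)"
proof -
  have "r * norm (\<alpha> *\<^sub>R u + \<beta> *\<^sub>R w) \<le> r * (\<alpha> * norm u + \<beta> * norm w)"
    using assms norm_triangle_ineq[of "\<alpha> *\<^sub>R u" "\<beta> *\<^sub>R w"] by (intro mult_left_mono) auto
  also have "\<dots> = \<alpha> * (r * norm u) + \<beta> * (r * norm w)" by (simp add: algebra_simps)
  also have "\<dots> \<le> \<alpha> * (y \<bullet> u) + \<beta> * (y \<bullet> w)"
    using assms by (intro add_mono mult_left_mono) auto
  also have "\<dots> = y \<bullet> (\<alpha> *\<^sub>R u + \<beta> *\<^sub>R w)" by (simp add: inner_add_right)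
  finally show ?thesis .
qed

lemma inner_near_point_ge_iff:
  assumes "ca \<noteq> cb"
  shows "(x - near_point ca ra cb) \<bullet> (cb - ca) \<ge> 0 \<longleftrightarrow> (x - ca) \<bullet> (cb - ca) \<ge> ra * norm (cb - ca)"
proof -
  have "(near_point ca ra cb - ca) \<bullet> (cb - ca) = ra * norm (cb - ca)"
    using assms by (simp add: near_point_def power2_norm_eq_inner[symmetric] power2_eq_square)
  moreover have "x - near_point ca ra cb = (x - ca) - (near_point ca ra cb - ca)" by simp
  ultimately show ?thesis by (simp only: inner_diff_left) linarith
qed

lemma slab_commute: "slab ca ra cb rb = slab cb rb ca ra"
proof -
  have "(x - y) \<bullet> (ca - cb) = - ((x - y) \<bullet> (cb - ca))" for x y :: point
    by (metis inner_minus_right minus_diff_eq)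
  then show ?thesis by (auto simp: slab_def)
qed

lemma mem_slab_iff:
  assumes "ca \<noteq> cb"
  shows "x \<in> slab ca ra cb rb \<longleftrightarrow>
    (x - ca) \<bullet> (cb - ca) \<ge> ra * norm (cb - ca) \<and> (x - cb) \<bullet> (ca - cb) \<ge> rb * norm (ca - cb)"
proof -
  have "(x - near_point cb rb ca) \<bullet> (cb - ca) \<le> 0 \<longleftrightarrow> (x - near_point cb rb ca) \<bullet> (ca - cb) \<ge> 0"
    by (metis inner_minus_right minus_diff_eq neg_0_le_iff_le)
  then show ?thesis
    using assms by (simp add: slab_def inner_near_point_ge_iff)
qed

lemma objective_arc_conic:
  assumes "p \<in> objective_arc ca ra cb cc" "ra \<ge> 0"
  obtains \<alpha> \<beta> where "\<alpha> \<ge> 0" "\<beta> \<ge> 0" "p - ca = \<alpha> *\<^sub>R (cb - ca) + \<beta> *\<^sub>R (cc - ca)"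
proof -
  from assms(1) obtain a b where "a \<ge> 0" "b \<ge> 0"
    and p: "p = ca + a *\<^sub>R (near_point ca ra cb - ca) + b *\<^sub>R (near_point ca ra cc - ca)"
    unfolding objective_arc_def minor_arc_def by blast
  have "p - ca = (a * (ra / norm (cb - ca))) *\<^sub>R (cb - ca) + (b * (ra / norm (cc - ca))) *\<^sub>R (cc - ca)"
    by (simp add: p near_point_def)
  then show ?thesis
    by (rule that[rotated 2]) (use \<open>a \<ge> 0\<close> \<open>b \<ge> 0\<close> assms(2) in auto)
qed

lemma objective_arc_illuminated:
  assumes "ra > 0" "rb \<ge> 0" "rc \<ge> 0"
    and "cball ca ra \<inter> cball cb rb = {}" "cball ca ra \<inter> cball cc rc = {}"
    and "q \<in> slab ca ra cb rb" "q \<in> slab ca ra cc rc"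
    and "p \<in> objective_arc ca ra cb cc"
  shows "open_segment q p \<inter> ball ca ra = {} \<and>
         open_segment q p \<inter> ball cb rb = {} \<and>
         open_segment q p \<inter> ball cc rc = {}"
proof -
  have dist_b: "dist ca cb > ra + rb" and dist_c: "dist ca cc > ra + rc"
    using assms(1-5) by (auto intro: disjoint_cballD)
  then have "ca \<noteq> cb" "ca \<noteq> cc" using assms(1-3) by auto
  then have q_b: "(q - ca) \<bullet> (cb - ca) \<ge> ra * norm (cb - ca)" "(q - cb) \<bullet> (ca - cb) \<ge> rb * norm (ca - cb)"
    and q_c: "(q - ca) \<bullet> (cc - ca) \<ge> ra * norm (cc - ca)" "(q - cc) \<bullet> (ca - cc) \<ge> rc * norm (ca - cc)"
    using assms(6,7) by (auto simp: mem_slab_iff)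
  have p_norm: "norm (p - ca) = ra"
    using assms(8) by (simp add: objective_arc_def minor_arc_def dist_norm norm_minus_commute)
  obtain \<alpha> \<beta> where "\<alpha> \<ge> 0" "\<beta> \<ge> 0" and p: "p - ca = \<alpha> *\<^sub>R (cb - ca) + \<beta> *\<^sub>R (cc - ca)"
    using objective_arc_conic[OF assms(8)] assms(1) by auto
  have q_a: "(q - ca) \<bullet> (p - ca) \<ge> ra * norm (p - ca)"
    unfolding p using q_b(1) q_c(1) \<open>\<alpha> \<ge> 0\<close> \<open>\<beta> \<ge> 0\<close> assms(1)
    by (intro inner_ge_norm_conic_combination) auto
  have p_a: "(p - ca) \<bullet> (p - ca) \<ge> ra * norm (p - ca)"
    using p_norm by (simp add: power2_norm_eq_inner[symmetric] power2_eq_square)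
  have "p - ca \<noteq> 0" using p_norm assms(1) by auto
  have "p \<in> cball ca ra" using p_norm by (simp add: dist_norm norm_minus_commute)
  then have p_b: "(p - cb) \<bullet> (ca - cb) \<ge> rb * norm (ca - cb)"
    and p_c: "(p - cc) \<bullet> (ca - cc) \<ge> rc * norm (ca - cc)"
    using dist_b dist_c by (auto intro: cball_subset_far_halfspace)
  show ?thesis
    using open_segment_disjoint_ball[OF \<open>p - ca \<noteq> 0\<close> q_a p_a]
      open_segment_disjoint_ball[of "ca - cb", OF _ q_b(2) p_b]
      open_segment_disjoint_ball[of "ca - cc", OF _ q_c(2) p_c]
      \<open>ca \<noteq> cb\<close> \<open>ca \<noteq> cc\<close> by auto
qed

theorem theorem1:
  fixes ci cj ck :: "real^2" and ri rj rk :: real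
  assumes "ri > 0" "rj > 0" "rk > 0"
    and "cball ci ri \<inter> cball cj rj = {}"
    and "cball cj rj \<inter> cball ck rk = {}"
    and "cball ci ri \<inter> cball ck rk = {}"
    and "\<not> collinear {ci, cj, ck}"
    and "q \<in> feasible_region ci ri cj rj ck rk"
    and "p \<in> objective_arc ci ri cj ck \<union> objective_arc cj rj ci ck \<union> objective_arc ck rk ci cj"
  shows "open_segment q p \<inter> ball ci ri = {} \<and>
         open_segment q p \<inter> ball cj rj = {} \<and>
         open_segment q p \<inter> ball ck rk = {}"
proof -
  have radii: "ri > 0" "rj > 0" "rk > 0" "ri \<ge> 0" "rj \<ge> 0" "rk \<ge> 0" using assms(1-3) by auto
  have disjoint: "cball cj rj \<inter> cball ci ri = {}" "cball ck rk \<inter> cball ci ri = {}"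
    "cball ck rk \<inter> cball cj rj = {}" using assms(4-6) by blast+
  from assms(8) have "q \<in> slab ci ri cj rj" "q \<in> slab cj rj ck rk" "q \<in> slab ci ri ck rk"
    "q \<in> slab cj rj ci ri" "q \<in> slab ck rk cj rj" "q \<in> slab ck rk ci ri"
    by (auto simp: feasible_region_def slab_commute)
  with assms(4-6,9) radii disjoint show ?thesis
    using objective_arc_illuminated[of ri rj rk ci cj ck q p]
      objective_arc_illuminated[of rj ri rk cj ci ck q p]
      objective_arc_illuminated[of rk ri rj ck ci cj q p]
    by blast
qed

end
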